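(* Let $(g,[\cdot,\cdot]_1,[\cdot,\cdot]_2,\alpha,\beta)$ be a compatible BiHom-Lie algebra and $(V,\bullet_1,\bullet_2,\alpha_V,\beta_V)$ a representation of it (with $\alpha,\beta,\alpha_V,\beta_V$ bijective). Let $g_+=(g,[\cdot,\cdot]_1+[\cdot,\cdot]_2,\alpha,\beta)$, a BiHom-Lie algebra, and $V_+=(V,\bullet_1+\bullet_2,\alpha_V,\beta_V)$, a representation of $g_+$. Define $\varphi_n:C^n_{cBiHom}(g,V)\to C^n_{BiHom}(g_+,V_+)$ by $\varphi_0(v)=\frac12 v$ for $v\in C^0_{cBiHom}(g,V)$ and $\varphi_n(f_1,\dots,f_n)=f_1+\dots+f_n$ for $n\ge1$. Then $\{\varphi_n\}_{n\ge0}$ is a morphism of cochain complexes from $\{C^\ast_{cBiHom}(g,V),\delta_{cBiHom}\}$ to $\{C^\ast_{BiHom}(g_+,V_+),\delta_{BiHom}\}$, and hence induces a morphism $H^\ast_{cBiHom}(g,V)\to H^\ast_{BiHom}(g_+,V_+)$ between the corresponding cohomologies.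
   Context: A BiHom-Lie algebra is $(g,[\cdot,\cdot],\alpha,\beta)$ with $\alpha,\beta$ linear, $\alpha\beta=\beta\alpha$, $[\beta(p),\alpha(q)]=-[\beta(q),\alpha(p)]$, $[\beta^{2}(p),[\beta(q),\alpha(r)]]+[\beta^{2}(q),[\beta(r),\alpha(p)]]+[\beta^{2}(r),[\beta(p),\alpha(q)]]=0$. A compatible BiHom-Lie algebra $(g,[\cdot,\cdot]_1,[\cdot,\cdot]_2,\alpha,\beta)$: both $(g,[\cdot,\cdot]_i,\alpha,\beta)$ are BiHom-Lie algebras and $\lambda[\cdot,\cdot]_1+\eta[\cdot,\cdot]_2$ gives a BiHom-Lie algebra for all $\lambda,\eta\in\mathbb{K}$. A representation $(V,\bullet,\alpha_V,\beta_V)$ of $(g,[\cdot,\cdot],\alpha,\beta)$: $\alpha_V,\beta_V$ commuting linear maps, $\bullet:g\otimes V\to V$ bilinear with $\alpha(p)\bullet\alpha_V(v)=\alpha_V(p\bullet v)$, $\beta(p)\bullet\beta_V(v)=\beta_V(p\bullet v)$, $[\beta(p),q]\bullet\beta_V(v)=\alpha\beta(p)\bullet(q\bullet v)-\beta(q)\bullet(\alpha(p)\bullet v)$. A representation of the compatible algebra is $(V,\bullet_1,\bullet_2,\alpha_V,\beta_V)$ with $(V,\bullet_i,\alpha_V,\beta_V)$ a representation of $(g,[\cdot,\cdot]_i,\alpha,\beta)$ and $[\beta(p),q]_1\bullet_2\beta_V(v)+[\beta(p),q]_2\bullet_1\beta_V(v)=\alpha\beta(p)\bullet_1(q\bullet_2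 v)-\beta(q)\bullet_2(\alpha(p)\bullet_1 v)+\alpha\beta(p)\bullet_2(q\bullet_1 v)-\beta(q)\bullet_1(\alpha(p)\bullet_2 v)$. Cochains: $C^0_{BiHom}(g,V)=\{v:\alpha_V(v)=v=\beta_V(v)\}$; $C^n_{BiHom}(g,V)=\{f:\otimes^n g\to V\text{ multilinear}:\alpha_V\circ f=f\circ\alpha^{\otimes n},\beta_V\circ f=f\circ\beta^{\otimes n}\}$ ($n\ge1$). For a BiHom-Lie algebra with representation $\bullet$, the coboundary $\delta_{BiHom}$ is $\delta_{BiHom}(v)(p)=\alpha\beta^{-1}(p)\bullet v$ on $C^0$, and $\delta_{BiHom}f(p_1,\dots,p_{n+1})=\sum_{i=1}^{n+1}(-1)^{i}\alpha\beta^{n-1}(p_i)\bullet f(p_1,\dots,\widehat{p_i},\dots,p_{n+1})+\sum_{1\le i<j\le n+1}(-1)^{i+j+1}f([\alpha^{-1}\beta(p_i),p_j],\beta(p_1),\dots,\widehat{\beta(p_i)},\dots,\widehat{\beta(p_j)},\dots,\beta(p_{n+1}))$; $H^\ast_{BiHom}$ is its cohomology. ${}^{i}\delta_{BiHom}$ denotes this coboundary for $(g,[\cdot,\cdot]_i,\alpha,\beta)$ with coefficients in $(V,\bullet_i,\alpha_V,\beta_V)$. The compatible complex: $C^{0}_{cBiHom}(g,V)=\{v\in V:\alpha_V(v)=v,\beta_V(v)=v,\ \alpha\beta^{-1}(p)\bullet_1 v=\alpha\beta^{-1}(p)\bullet_2 v\ \forall p\}$, $C^{n}_{cBiHom}(g,V)=C^n_{BiHom}(g,V)^{\oplus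 n}$ for $n\ge1$; $\delta_{cBiHom}(v)(p)=\alpha\beta^{-1}(p)\bullet_1 v$ and $\delta_{cBiHom}(f_1,\dots,f_n)=({}^{1}\delta_{BiHom}f_1,\dots,{}^{1}\delta_{BiHom}f_i+{}^{2}\delta_{BiHom}f_{i-1},\dots,{}^{2}\delta_{BiHom}f_n)$ (the $i$-th component for $2\le i\le n$ being ${}^{1}\delta_{BiHom}f_i+{}^{2}\delta_{BiHom}f_{i-1}$); $H^\ast_{cBiHom}(g,V)$ is its cohomology. *)

theory Defs
  imports Complex_Main
begin

text \<open>Vector spaces over a field 'k are modelled by types 'g, 'v of class ab_group_add
together with scalar multiplications sg, sv satisfying the vector_space locale.
n-ary multilinear maps are functions on lists, relevant on lists of length n.\<close>

definition bilin :: "('k::field \<Rightarrow> 'a::ab_group_add \<Rightarrow> 'a) \<Rightarrow> ('k \<Rightarrow> 'b::ab_group_add \<Rightarrow> 'b)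
    \<Rightarrow> ('k \<Rightarrow> 'c::ab_group_add \<Rightarrow> 'c) \<Rightarrow> ('a \<Rightarrow> 'b \<Rightarrow> 'c) \<Rightarrow> bool" where
  "bilin sa sb sc m \<longleftrightarrow> (\<forall>p. Vector_Spaces.linear sb sc (m p)) \<and> (\<forall>q. Vector_Spaces.linear sa sc (\<lambda>p. m p q))"

definition bihom_lie :: "('k::field \<Rightarrow> 'g::ab_group_add \<Rightarrow> 'g) \<Rightarrow> ('g \<Rightarrow> 'g \<Rightarrow> 'g)
    \<Rightarrow> ('g \<Rightarrow> 'g) \<Rightarrow> ('g \<Rightarrow> 'g) \<Rightarrow> bool" where
  "bihom_lie sg b \<alpha> \<beta> \<longleftrightarrow>
     bilin sg sg sg b \<and> Vector_Spaces.linear sg sg \<alpha> \<and> Vector_Spaces.linear sg sg \<beta> \<and> \<alpha> \<circ> \<beta> = \<beta> \<circ> \<alpha> \<and>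
     (\<forall>p q. b (\<beta> p) (\<alpha> q) = - b (\<beta> q) (\<alpha> p)) \<and>
     (\<forall>p q r. b ((\<beta>^^2) p) (b (\<beta> q) (\<alpha> r)) + b ((\<beta>^^2) q) (b (\<beta> r) (\<alpha> p))
               + b ((\<beta>^^2) r) (b (\<beta> p) (\<alpha> q)) = 0)"

definition compatible_bihom_lie :: "('k::field \<Rightarrow> 'g::ab_group_add \<Rightarrow> 'g) \<Rightarrow> ('g \<Rightarrow> 'g \<Rightarrow> 'g)
    \<Rightarrow> ('g \<Rightarrow> 'g \<Rightarrow> 'g) \<Rightarrow> ('g \<Rightarrow> 'g) \<Rightarrow> ('g \<Rightarrow> 'g) \<Rightarrow> bool" where
  "compatible_bihom_lie sg b1 b2 \<alpha> \<beta> \<longleftrightarrow>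
     bihom_lie sg b1 \<alpha> \<beta> \<and> bihom_lie sg b2 \<alpha> \<beta> \<and>
     (\<forall>c d. bihom_lie sg (\<lambda>p q. sg c (b1 p q) + sg d (b2 p q)) \<alpha> \<beta>)"

definition bihom_rep :: "('k::field \<Rightarrow> 'g::ab_group_add \<Rightarrow> 'g) \<Rightarrow> ('k \<Rightarrow> 'v::ab_group_add \<Rightarrow> 'v)
    \<Rightarrow> ('g \<Rightarrow> 'g \<Rightarrow> 'g) \<Rightarrow> ('g \<Rightarrow> 'g) \<Rightarrow> ('g \<Rightarrow> 'g) \<Rightarrow> ('v \<Rightarrow> 'v) \<Rightarrow> ('v \<Rightarrow> 'v)
    \<Rightarrow> ('g \<Rightarrow> 'v \<Rightarrow> 'v) \<Rightarrow> bool" where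
  "bihom_rep sg sv b \<alpha> \<beta> \<alpha>V \<beta>V act \<longleftrightarrow>
     Vector_Spaces.linear sv sv \<alpha>V \<and> Vector_Spaces.linear sv sv \<beta>V \<and> \<alpha>V \<circ> \<beta>V = \<beta>V \<circ> \<alpha>V \<and>
     bilin sg sv sv act \<and>
     (\<forall>p v. act (\<alpha> p) (\<alpha>V v) = \<alpha>V (act p v)) \<and>
     (\<forall>p v. act (\<beta> p) (\<beta>V v) = \<beta>V (act p v)) \<and>
     (\<forall>p q v. act (b (\<beta> p) q) (\<beta>V v) = act (\<alpha> (\<beta> p)) (act q v) - act (\<beta> q) (act (\<alpha> p) v))"

definition compatible_bihom_rep :: "('k::field \<Rightarrow> 'g::ab_group_add \<Rightarrow> 'g) \<Rightarrow> ('k \<Rightarrow> 'v::ab_group_add \<Rightarrow> 'v)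
    \<Rightarrow> ('g \<Rightarrow> 'g \<Rightarrow> 'g) \<Rightarrow> ('g \<Rightarrow> 'g \<Rightarrow> 'g) \<Rightarrow> ('g \<Rightarrow> 'g) \<Rightarrow> ('g \<Rightarrow> 'g)
    \<Rightarrow> ('v \<Rightarrow> 'v) \<Rightarrow> ('v \<Rightarrow> 'v) \<Rightarrow> ('g \<Rightarrow> 'v \<Rightarrow> 'v) \<Rightarrow> ('g \<Rightarrow> 'v \<Rightarrow> 'v) \<Rightarrow> bool" where
  "compatible_bihom_rep sg sv b1 b2 \<alpha> \<beta> \<alpha>V \<beta>V act1 act2 \<longleftrightarrow>
     bihom_rep sg sv b1 \<alpha> \<beta> \<alpha>V \<beta>V act1 \<and> bihom_rep sg sv b2 \<alpha> \<beta> \<alpha>V \<beta>V act2 \<and>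
     (\<forall>p q v. act2 (b1 (\<beta> p) q) (\<beta>V v) + act1 (b2 (\<beta> p) q) (\<beta>V v)
        = act1 (\<alpha> (\<beta> p)) (act2 q v) - act2 (\<beta> q) (act1 (\<alpha> p) v)
          + act2 (\<alpha> (\<beta> p)) (act1 q v) - act1 (\<beta> q) (act2 (\<alpha> p) v))"

definition del_nth :: "nat \<Rightarrow> 'a list \<Rightarrow> 'a list" where
  "del_nth i xs = take i xs @ drop (Suc i) xs"

definition cochain :: "('k::field \<Rightarrow> 'g::ab_group_add \<Rightarrow> 'g) \<Rightarrow> ('k \<Rightarrow> 'v::ab_group_add \<Rightarrow> 'v)
    \<Rightarrow> ('g \<Rightarrow> 'g) \<Rightarrow> ('g \<Rightarrow> 'g) \<Rightarrow> ('v \<Rightarrow> 'v) \<Rightarrow> ('v \<Rightarrow> 'v) \<Rightarrow> nat \<Rightarrow> ('g list \<Rightarrow> 'v) \<Rightarrow> bool" where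
  "cochain sg sv \<alpha> \<beta> \<alpha>V \<beta>V n f \<longleftrightarrow>
     (\<forall>ps i. length ps = n \<and> i < n \<longrightarrow> Vector_Spaces.linear sg sv (\<lambda>x. f (ps[i := x]))) \<and>
     (\<forall>ps. length ps = n \<longrightarrow> \<alpha>V (f ps) = f (map \<alpha> ps) \<and> \<beta>V (f ps) = f (map \<beta> ps))"

definition cochain0 :: "('v \<Rightarrow> 'v) \<Rightarrow> ('v \<Rightarrow> 'v) \<Rightarrow> 'v set" where
  "cochain0 \<alpha>V \<beta>V = {v. \<alpha>V v = v \<and> \<beta>V v = v}"

definition cobd0 :: "('g \<Rightarrow> 'v \<Rightarrow> 'v) \<Rightarrow> ('g \<Rightarrow> 'g) \<Rightarrow> ('g \<Rightarrow> 'g) \<Rightarrow> 'v \<Rightarrow> 'g list \<Rightarrow> 'v" where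
  "cobd0 act \<alpha> \<beta> v ps = act (\<alpha> (inv \<beta> (hd ps))) v"

text \<open>Coboundary on n-cochains (n \<ge> 1); indices are 0-based, so the signs
  (-1)^i and (-1)^(i+j+1) of the paper (1-based) become (-1)^(i+1), (-1)^(i+j+1).\<close>
definition cobd :: "('k::field \<Rightarrow> 'v::ab_group_add \<Rightarrow> 'v) \<Rightarrow> ('g \<Rightarrow> 'g \<Rightarrow> 'g) \<Rightarrow> ('g \<Rightarrow> 'v \<Rightarrow> 'v)
    \<Rightarrow> ('g \<Rightarrow> 'g) \<Rightarrow> ('g \<Rightarrow> 'g) \<Rightarrow> nat \<Rightarrow> ('g list \<Rightarrow> 'v) \<Rightarrow> 'g list \<Rightarrow> 'v" where
  "cobd sv b act \<alpha> \<beta> n f ps =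
     (\<Sum>i<Suc n. sv ((-1) ^ Suc i) (act (\<alpha> ((\<beta>^^(n - 1)) (ps ! i))) (f (del_nth i ps))))
   + (\<Sum>j<Suc n. \<Sum>i<j. sv ((-1) ^ (i + j + 1))
        (f (b (inv \<alpha> (\<beta> (ps ! i))) (ps ! j) # map \<beta> (del_nth i (del_nth j ps)))))"

definition ccochain0 :: "('g \<Rightarrow> 'g) \<Rightarrow> ('g \<Rightarrow> 'g) \<Rightarrow> ('v \<Rightarrow> 'v) \<Rightarrow> ('v \<Rightarrow> 'v)
    \<Rightarrow> ('g \<Rightarrow> 'v \<Rightarrow> 'v) \<Rightarrow> ('g \<Rightarrow> 'v \<Rightarrow> 'v) \<Rightarrow> 'v set" where
  "ccochain0 \<alpha> \<beta> \<alpha>V \<beta>V act1 act2 =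
     {v. \<alpha>V v = v \<and> \<beta>V v = v \<and> (\<forall>p. act1 (\<alpha> (inv \<beta> p)) v = act2 (\<alpha> (inv \<beta> p)) v)}"

definition ccochain :: "('k::field \<Rightarrow> 'g::ab_group_add \<Rightarrow> 'g) \<Rightarrow> ('k \<Rightarrow> 'v::ab_group_add \<Rightarrow> 'v)
    \<Rightarrow> ('g \<Rightarrow> 'g) \<Rightarrow> ('g \<Rightarrow> 'g) \<Rightarrow> ('v \<Rightarrow> 'v) \<Rightarrow> ('v \<Rightarrow> 'v) \<Rightarrow> nat \<Rightarrow> ('g list \<Rightarrow> 'v) list \<Rightarrow> bool" where
  "ccochain sg sv \<alpha> \<beta> \<alpha>V \<beta>V n fs \<longleftrightarrow>
     length fs = n \<and> (\<forall>f\<in>set fs. cochain sg sv \<alpha> \<beta> \<alpha>V \<beta>V n f)"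

definition ccobd0 :: "('g \<Rightarrow> 'v \<Rightarrow> 'v) \<Rightarrow> ('g \<Rightarrow> 'g) \<Rightarrow> ('g \<Rightarrow> 'g) \<Rightarrow> 'v \<Rightarrow> ('g list \<Rightarrow> 'v) list" where
  "ccobd0 act1 \<alpha> \<beta> v = [cobd0 act1 \<alpha> \<beta> v]"

text \<open>Compatible coboundary on n-cochains (n \<ge> 1): the (n+1)-tuple whose k-th entry
  (0-based) is  1\<delta> f_(k+1) + 2\<delta> f_k, where missing terms are omitted.\<close>
definition ccobd :: "('k::field \<Rightarrow> 'v::ab_group_add \<Rightarrow> 'v) \<Rightarrow> ('g \<Rightarrow> 'g \<Rightarrow> 'g) \<Rightarrow> ('g \<Rightarrow> 'g \<Rightarrow> 'g)
    \<Rightarrow> ('g \<Rightarrow> 'v \<Rightarrow> 'v) \<Rightarrow> ('g \<Rightarrow> 'v \<Rightarrow> 'v) \<Rightarrow> ('g \<Rightarrow> 'g) \<Rightarrow> ('g \<Rightarrow> 'g) \<Rightarrow> nat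
    \<Rightarrow> ('g list \<Rightarrow> 'v) list \<Rightarrow> ('g list \<Rightarrow> 'v) list" where
  "ccobd sv b1 b2 act1 act2 \<alpha> \<beta> n fs =
     map (\<lambda>k ps. (if k < n then cobd sv b1 act1 \<alpha> \<beta> n (fs ! k) ps else 0)
                + (if 0 < k then cobd sv b2 act2 \<alpha> \<beta> n (fs ! (k - 1)) ps else 0))
         [0..<Suc n]"

definition phi0 :: "('k::field \<Rightarrow> 'v \<Rightarrow> 'v) \<Rightarrow> 'v \<Rightarrow> 'v" where
  "phi0 sv v = sv (1/2) v"

definition phi :: "('g list \<Rightarrow> 'v::comm_monoid_add) list \<Rightarrow> 'g list \<Rightarrow> 'v" where
  "phi fs = (\<lambda>ps. sum_list (map (\<lambda>f. f ps) fs))"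

end

theory Submission
  imports Defs
begin

(* The coboundary of g_+ with coefficients in V_+ is additive in the
   cochain, and also in the pair (bracket, action): each term is linear in the action or, through
   the first argument of the cochain, in the bracket. Hence delta_+ (f_1 + ... + f_n) is the sum
   over k of (1delta f_k + 2delta f_k), which regroups into the sum of the components of
   delta_c (f_1, ..., f_n). In degree 0, compatibility makes both actions agree on v, so the factor
   1/2 compensates for the doubled action. *)

lemma linear_imp_additive: "Vector_Spaces.linear s1 s2 f \<Longrightarrow> additive f"
  by (simp add: Vector_Spaces.linear_iff additive.intro)

lemma additive_pointwise_add: "additive f \<Longrightarrow> additive g \<Longrightarrow> additive (\<lambda>x. f x + g x)"
  by (simp add: additive_def algebra_simps)

lemma scale_half_add_self:
  fixes s :: "'k::field \<Rightarrow> 'v::ab_group_add \<Rightarrow> 'v"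
  assumes "module s" and "(2::'k) \<noteq> 0"
  shows "s (1/2) x + s (1/2) x = x"
proof -
  have "s (1/2) x + s (1/2) x = s (1/2 + 1/2) x"
    by (rule module.scale_left_distrib[OF assms(1), symmetric])
  also have "(1/2 + 1/2 :: 'k) = 1"
    using assms(2) by (simp add: field_simps)
  finally show ?thesis
    using assms(1) by (simp add: module.scale_one)
qed

lemma length_del_nth [simp]: "i < length xs \<Longrightarrow> length (del_nth i xs) = length xs - 1"
  unfolding del_nth_def by simp

lemma phi_Nil [simp]: "phi [] = (\<lambda>_. 0)"
  unfolding phi_def by simp

lemma phi_Cons [simp]: "phi (f # fs) = (\<lambda>ps. f ps + phi fs ps)"
  unfolding phi_def by simp

lemma bihom_rep_linear:
  assumes "bihom_rep sg sv b \<alpha> \<beta> \<alpha>V \<beta>V act"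
  shows "Vector_Spaces.linear sv sv \<alpha>V" "Vector_Spaces.linear sv sv \<beta>V"
    and "Vector_Spaces.linear sv sv (act p)"
  using assms unfolding bihom_rep_def bilin_def by auto

lemma cobd_add:
  assumes "module sv" and "\<And>p. additive (act p)"
  shows "cobd sv b act \<alpha> \<beta> n (\<lambda>ps. f ps + g ps) ps
       = cobd sv b act \<alpha> \<beta> n f ps + cobd sv b act \<alpha> \<beta> n g ps"
  using assms unfolding cobd_def
  by (simp add: additive.add module.scale_right_distrib sum.distrib algebra_simps)

lemma cobd_zero:
  assumes "module sv" and "\<And>p. additive (act p)"
  shows "cobd sv b act \<alpha> \<beta> n (\<lambda>_. 0) ps = 0"
  using assms unfolding cobd_def by (simp add: additive.zero module.scale_zero_right)

lemma cobd_phi: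
  assumes "module sv" and "\<And>p. additive (act p)"
  shows "cobd sv b act \<alpha> \<beta> n (phi fs) ps = (\<Sum>f\<leftarrow>fs. cobd sv b act \<alpha> \<beta> n f ps)"
  by (induction fs) (simp_all add: cobd_add cobd_zero assms)

lemma cobd_bracket_action_add:
  assumes "module sv" and "length ps = Suc n"
    and "\<And>x y rest. length rest = n - 1 \<Longrightarrow> f ((x + y) # rest) = f (x # rest) + f (y # rest)"
  shows "cobd sv (\<lambda>p q. b1 p q + b2 p q) (\<lambda>p v. a1 p v + a2 p v) \<alpha> \<beta> n f ps
       = cobd sv b1 a1 \<alpha> \<beta> n f ps + cobd sv b2 a2 \<alpha> \<beta> n f ps"
proof -
  have "f ((b1 x (ps ! j) + b2 x (ps ! j)) # map \<beta> (del_nth i (del_nth j ps)))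
      = f (b1 x (ps ! j) # map \<beta> (del_nth i (del_nth j ps)))
      + f (b2 x (ps ! j) # map \<beta> (del_nth i (del_nth j ps)))"
    if "j < Suc n" "i < j" for i j x
    using that assms(2) by (intro assms(3)) simp
  then show ?thesis
    using assms(1) unfolding cobd_def
    by (simp add: module.scale_right_distrib sum.distrib algebra_simps cong: sum.cong_simp)
qed

lemma phi_ccobd:
  "phi (ccobd sv b1 b2 act1 act2 \<alpha> \<beta> n fs) ps
   = (\<Sum>k<n. cobd sv b1 act1 \<alpha> \<beta> n (fs ! k) ps) + (\<Sum>k<n. cobd sv b2 act2 \<alpha> \<beta> n (fs ! k) ps)"
proof -
  let ?c1 = "\<lambda>k. cobd sv b1 act1 \<alpha> \<beta> n (fs ! k) ps"
  let ?c2 = "\<lambda>k. cobd sv b2 act2 \<alpha> \<beta> n (fs ! k) ps"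
  have "phi (ccobd sv b1 b2 act1 act2 \<alpha> \<beta> n fs) ps
      = (\<Sum>k<Suc n. (if k < n then ?c1 k else 0)) + (\<Sum>k<Suc n. (if 0 < k then ?c2 (k - 1) else 0))"
    unfolding phi_def ccobd_def
    by (simp add: interv_sum_list_conv_sum_set_nat atLeast0LessThan sum.distrib)
  also have "(\<Sum>k<Suc n. (if k < n then ?c1 k else 0)) = sum ?c1 {..<n}"
    by simp
  also have "(\<Sum>k<Suc n. (if 0 < k then ?c2 (k - 1) else 0)) = sum ?c2 {..<n}"
    unfolding sum.lessThan_Suc_shift by simp
  finally show ?thesis .
qed

lemma cochain_head_additive:
  assumes "cochain sg sv \<alpha> \<beta> \<alpha>V \<beta>V (Suc m) f" and "length rest = m"
  shows "f ((x + y) # rest) = f (x # rest) + f (y # rest)"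
proof -
  have "Vector_Spaces.linear sg sv (\<lambda>z. f ((x # rest)[0 := z]))"
    using assms unfolding cochain_def by (metis length_Cons zero_less_Suc)
  then show ?thesis
    by (simp add: Vector_Spaces.linear_iff)
qed

lemma cochain_zero:
  assumes "vector_space sg" "vector_space sv" "additive \<alpha>V" "additive \<beta>V"
  shows "cochain sg sv \<alpha> \<beta> \<alpha>V \<beta>V n (\<lambda>_. 0)"
  using assms unfolding cochain_def
  by (simp add: vector_space_pair.linear_zero vector_space_pair_def additive.zero)

lemma cochain_add:
  assumes "additive \<alpha>V" "additive \<beta>V"
    and "cochain sg sv \<alpha> \<beta> \<alpha>V \<beta>V n f" "cochain sg sv \<alpha> \<beta> \<alpha>V \<beta>V n g"
  shows "cochain sg sv \<alpha> \<beta> \<alpha>V \<beta>V n (\<lambda>ps. f ps + g ps)"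
  using assms unfolding cochain_def
  by (simp add: additive.add Vector_Spaces.linear_iff module.scale_right_distrib module_iff_vector_space)

lemma cochain_phi:
  assumes "vector_space sg" "vector_space sv" "additive \<alpha>V" "additive \<beta>V"
    and "\<forall>f\<in>set fs. cochain sg sv \<alpha> \<beta> \<alpha>V \<beta>V n f"
  shows "cochain sg sv \<alpha> \<beta> \<alpha>V \<beta>V n (phi fs)"
  using assms(5) by (induction fs) (simp_all add: cochain_zero cochain_add assms(1-4))

lemma cobd_phi_eq_phi_ccobd:
  assumes "module sv" "\<And>p. additive (act1 p)" "\<And>p. additive (act2 p)"
    and "ccochain sg sv \<alpha> \<beta> \<alpha>V \<beta>V n fs" "1 \<le> n" "length ps = Suc n"
  shows "cobd sv (\<lambda>p q. b1 p q + b2 p q) (\<lambda>p v. act1 p v + act2 p v) \<alpha> \<beta> n (phi fs) ps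
       = phi (ccobd sv b1 b2 act1 act2 \<alpha> \<beta> n fs) ps"
proof -
  let ?c1 = "\<lambda>f. cobd sv b1 act1 \<alpha> \<beta> n f ps" and ?c2 = "\<lambda>f. cobd sv b2 act2 \<alpha> \<beta> n f ps"
  have len: "length fs = n" and cochains: "\<forall>f\<in>set fs. cochain sg sv \<alpha> \<beta> \<alpha>V \<beta>V n f"
    using assms(4) unfolding ccochain_def by auto
  have split: "cobd sv (\<lambda>p q. b1 p q + b2 p q) (\<lambda>p v. act1 p v + act2 p v) \<alpha> \<beta> n f ps = ?c1 f + ?c2 f"
    if "f \<in> set fs" for f
  proof (rule cobd_bracket_action_add[OF assms(1,6)])
    have "cochain sg sv \<alpha> \<beta> \<alpha>V \<beta>V (Suc (n - 1)) f"
      using cochains that assms(5) by simp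
    then show "f ((x + y) # rest) = f (x # rest) + f (y # rest)" if "length rest = n - 1" for x y rest
      using that by (rule cochain_head_additive)
  qed
  have "cobd sv (\<lambda>p q. b1 p q + b2 p q) (\<lambda>p v. act1 p v + act2 p v) \<alpha> \<beta> n (phi fs) ps
      = (\<Sum>f\<leftarrow>fs. cobd sv (\<lambda>p q. b1 p q + b2 p q) (\<lambda>p v. act1 p v + act2 p v) \<alpha> \<beta> n f ps)"
    using assms(1-3) by (simp add: cobd_phi additive_pointwise_add)
  also have "\<dots> = (\<Sum>f\<leftarrow>fs. ?c1 f + ?c2 f)"
    by (intro arg_cong[where f = sum_list] map_cong) (simp_all add: split)
  also have "\<dots> = (\<Sum>k<n. ?c1 (fs ! k)) + (\<Sum>k<n. ?c2 (fs ! k))"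
    by (simp add: sum_list_sum_nth len atLeast0LessThan sum.distrib)
  also have "\<dots> = phi (ccobd sv b1 b2 act1 act2 \<alpha> \<beta> n fs) ps"
    by (rule phi_ccobd[symmetric])
  finally show ?thesis .
qed

lemma phi0_mem_cochain0:
  assumes "Vector_Spaces.linear sv sv \<alpha>V" "Vector_Spaces.linear sv sv \<beta>V"
    and "v \<in> ccochain0 \<alpha> \<beta> \<alpha>V \<beta>V act1 act2"
  shows "phi0 sv v \<in> cochain0 \<alpha>V \<beta>V"
  using assms by (simp add: ccochain0_def cochain0_def phi0_def Vector_Spaces.linear_iff)

lemma cobd0_phi0_eq_phi_ccobd0:
  fixes sv :: "'k::field \<Rightarrow> 'v::ab_group_add \<Rightarrow> 'v"
  assumes "module sv" "(2::'k) \<noteq> 0"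
    and "\<And>p. Vector_Spaces.linear sv sv (act1 p)" "\<And>p. Vector_Spaces.linear sv sv (act2 p)"
    and "v \<in> ccochain0 \<alpha> \<beta> \<alpha>V \<beta>V act1 act2"
  shows "cobd0 (\<lambda>p v. act1 p v + act2 p v) \<alpha> \<beta> (phi0 sv v) ps = phi (ccobd0 act1 \<alpha> \<beta> v) ps"
proof -
  have "act2 (\<alpha> (inv \<beta> (hd ps))) v = act1 (\<alpha> (inv \<beta> (hd ps))) v"
    using assms(5) unfolding ccochain0_def by auto
  with assms show ?thesis
    unfolding cobd0_def phi0_def ccobd0_def
    by (simp add: Vector_Spaces.linear_iff scale_half_add_self)
qed

theorem mainTheorem6:
  fixes sg :: "'k::field \<Rightarrow> 'g::ab_group_add \<Rightarrow> 'g"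
    and sv :: "'k \<Rightarrow> 'v::ab_group_add \<Rightarrow> 'v"
    and b1 b2 :: "'g \<Rightarrow> 'g \<Rightarrow> 'g"
    and \<alpha> \<beta> :: "'g \<Rightarrow> 'g"
    and \<alpha>V \<beta>V :: "'v \<Rightarrow> 'v"
    and act1 act2 :: "'g \<Rightarrow> 'v \<Rightarrow> 'v"
  assumes char: "(2::'k) \<noteq> 0"
    and vsg: "vector_space sg"
    and vsv: "vector_space sv"
    and alg: "compatible_bihom_lie sg b1 b2 \<alpha> \<beta>"
    and rep: "compatible_bihom_rep sg sv b1 b2 \<alpha> \<beta> \<alpha>V \<beta>V act1 act2"
    and bij: "bij \<alpha>" "bij \<beta>" "bij \<alpha>V" "bij \<beta>V"
  defines "bp \<equiv> (\<lambda>p q. b1 p q + b2 p q)"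
    and "actp \<equiv> (\<lambda>p v. act1 p v + act2 p v)"
  shows
    "(\<forall>v \<in> ccochain0 \<alpha> \<beta> \<alpha>V \<beta>V act1 act2.
        phi0 sv v \<in> cochain0 \<alpha>V \<beta>V \<and>
        (\<forall>ps. length ps = 1 \<longrightarrow>
           cobd0 actp \<alpha> \<beta> (phi0 sv v) ps = phi (ccobd0 act1 \<alpha> \<beta> v) ps))
   \<and> (\<forall>n \<ge> 1. \<forall>fs. ccochain sg sv \<alpha> \<beta> \<alpha>V \<beta>V n fs \<longrightarrow>
        cochain sg sv \<alpha> \<beta> \<alpha>V \<beta>V n (phi fs) \<and>
        (\<forall>ps. length ps = Suc n \<longrightarrow>
           cobd sv bp actp \<alpha> \<beta> n (phi fs) ps = phi (ccobd sv b1 b2 act1 act2 \<alpha> \<beta> n fs) ps))"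
proof -
  have sv: "module sv"
    using vsv by (simp add: module_iff_vector_space)
  have rep1: "bihom_rep sg sv b1 \<alpha> \<beta> \<alpha>V \<beta>V act1" and rep2: "bihom_rep sg sv b2 \<alpha> \<beta> \<alpha>V \<beta>V act2"
    using rep unfolding compatible_bihom_rep_def by auto
  note lin1 = bihom_rep_linear[OF rep1] and lin2 = bihom_rep_linear[OF rep2]
  have add1: "additive (act1 p)" and add2: "additive (act2 p)" for p
    by (rule linear_imp_additive[OF lin1(3)] linear_imp_additive[OF lin2(3)])+
  have "phi0 sv v \<in> cochain0 \<alpha>V \<beta>V
        \<and> cobd0 actp \<alpha> \<beta> (phi0 sv v) ps = phi (ccobd0 act1 \<alpha> \<beta> v) ps"
    if "v \<in> ccochain0 \<alpha> \<beta> \<alpha>V \<beta>V act1 act2" for v ps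
  proof
    show "phi0 sv v \<in> cochain0 \<alpha>V \<beta>V"
      using lin1(1,2) that by (rule phi0_mem_cochain0)
    show "cobd0 actp \<alpha> \<beta> (phi0 sv v) ps = phi (ccobd0 act1 \<alpha> \<beta> v) ps"
      unfolding actp_def using sv char lin1(3) lin2(3) that by (rule cobd0_phi0_eq_phi_ccobd0)
  qed
  moreover have "cochain sg sv \<alpha> \<beta> \<alpha>V \<beta>V n (phi fs)" if "ccochain sg sv \<alpha> \<beta> \<alpha>V \<beta>V n fs" for n fs
    using vsg vsv linear_imp_additive[OF lin1(1)] linear_imp_additive[OF lin1(2)] that
    unfolding ccochain_def by (intro cochain_phi) simp_all
  moreover have "cobd sv bp actp \<alpha> \<beta> n (phi fs) ps = phi (ccobd sv b1 b2 act1 act2 \<alpha> \<beta> n fs) ps"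
    if "ccochain sg sv \<alpha> \<beta> \<alpha>V \<beta>V n fs" "1 \<le> n" "length ps = Suc n" for n fs ps
    unfolding bp_def actp_def using sv add1 add2 that by (rule cobd_phi_eq_phi_ccobd)
  ultimately show ?thesis
    by blast
qed

end
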